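(* Let $n\ge 4$ and let $H$ be obtained from the cycle $C_n$ by attaching a single new pendant vertex (leaf) to each of two vertices of $C_n$ whose distance in $C_n$ is $2k+1$ for some integer $k\ge 0$. Then $\chi_\rho(H)\ge 4$.
   Context: $d(u,v)$ is the shortest-path distance. A $k$-packing coloring of $G$ is a map $c:V(G)\to\{1,\dots,k\}$ such that whenever $u\neq v$ and $c(u)=c(v)=i$, we have $d(u,v)>i$. $\chi_\rho(G)$ is the least $k$ such that $G$ has a $k$-packing coloring. *)

theory Defs
  imports Main
begin

text \<open>Simple graphs given by a vertex set V and a symmetric adjacency relation E.\<close>

definition walk :: "('a \<Rightarrow> 'a \<Rightarrow> bool) \<Rightarrow> 'a list \<Rightarrow> bool" where
  "walk E xs \<longleftrightarrow> xs \<noteq> [] \<and> (\<forall>i. Suc i < length xs \<longrightarrow> E (xs ! i) (xs ! Suc i))"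

text \<open>Shortest-path distance d(u,v): least number of edges of a walk from u to v
  (only meaningful for connected pairs).\<close>
definition gdist :: "('a \<Rightarrow> 'a \<Rightarrow> bool) \<Rightarrow> 'a \<Rightarrow> 'a \<Rightarrow> nat" where
  "gdist E u v = (LEAST m. \<exists>xs. walk E xs \<and> hd xs = u \<and> last xs = v \<and> length xs = Suc m)"

definition packing_coloring ::
  "'a set \<Rightarrow> ('a \<Rightarrow> 'a \<Rightarrow> bool) \<Rightarrow> nat \<Rightarrow> ('a \<Rightarrow> nat) \<Rightarrow> bool" where
  "packing_coloring V E k c \<longleftrightarrow>
     (\<forall>v\<in>V. c v \<in> {1..k}) \<and>
     (\<forall>u\<in>V. \<forall>v\<in>V. u \<noteq> v \<and> c u = c v \<longrightarrow> gdist E u v > c u)"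

definition packing_chromatic :: "'a set \<Rightarrow> ('a \<Rightarrow> 'a \<Rightarrow> bool) \<Rightarrow> nat" where
  "packing_chromatic V E = (LEAST k. \<exists>c. packing_coloring V E k c)"

definition cycle_adj :: "nat \<Rightarrow> nat \<Rightarrow> nat \<Rightarrow> bool" where
  "cycle_adj n u v \<longleftrightarrow> u < n \<and> v < n \<and> (v = (u + 1) mod n \<or> u = (v + 1) mod n)"

definition two_pendant_adj :: "nat \<Rightarrow> nat \<Rightarrow> nat \<Rightarrow> nat \<Rightarrow> nat \<Rightarrow> bool" where
  "two_pendant_adj n a b u v \<longleftrightarrow>
     cycle_adj n u v \<or> {u, v} = {a, n} \<or> {u, v} = {b, n + 1}"

end

theory Submission
  imports Defs
begin

text \<open>Suppose the graph had a packing colouring with colours 1, 2, 3. Of any six consecutive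
  cycle vertices one of the middle two has colour 1, so along the cycle colour 1 sits on exactly
  every other vertex: n is even and colour 1 is a parity class. A cycle vertex carrying a leaf
  cannot have colour 1, for then its two cycle neighbours have colours 2 and 3 and the leaf,
  adjacent to it and at distance 2 from both neighbours, has no colour left. So the two vertices
  carrying leaves have the same parity, whereas on an even cycle vertices at odd distance have
  opposite parity.\<close>

lemma walk_mono: "walk E xs \<Longrightarrow> (\<And>u v. E u v \<Longrightarrow> F u v) \<Longrightarrow> walk F xs"
  unfolding walk_def by blast

lemma gdist_le_walk:
  "walk E xs \<Longrightarrow> hd xs = u \<Longrightarrow> last xs = v \<Longrightarrow> length xs = Suc m \<Longrightarrow> gdist E u v \<le> m"
  unfolding gdist_def by (rule Least_le) blast

lemma gdist_le_1: "E u v \<Longrightarrow> gdist E u v \<le> 1"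
  by (rule gdist_le_walk[of E "[u, v]"]) (auto simp: walk_def)

lemma gdist_le_2: "E u v \<Longrightarrow> E v w \<Longrightarrow> gdist E u w \<le> 2"
  by (rule gdist_le_walk[of E "[u, v, w]"]) (auto simp: walk_def less_Suc_eq)

lemma shortest_walk_exists:
  assumes "walk E xs" "hd xs = u" "last xs = v"
  shows "\<exists>ys. walk E ys \<and> hd ys = u \<and> last ys = v \<and> length ys = Suc (gdist E u v)"
proof -
  have "length xs = Suc (length xs - 1)"
    using assms(1) by (simp add: walk_def)
  with assms have "\<exists>m ys. walk E ys \<and> hd ys = u \<and> last ys = v \<and> length ys = Suc m"
    by blast
  then show ?thesis
    unfolding gdist_def by (rule LeastI_ex)
qed

lemma packing_coloring_range: "packing_coloring V E k c \<Longrightarrow> v \<in> V \<Longrightarrow> c v \<in> {1..k}"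
  unfolding packing_coloring_def by blast

lemma packing_coloring_color_less:
  "packing_coloring V E k c \<Longrightarrow> u \<in> V \<Longrightarrow> v \<in> V \<Longrightarrow> u \<noteq> v \<Longrightarrow> c u = c v
    \<Longrightarrow> gdist E u v \<le> m \<Longrightarrow> c u < m"
  unfolding packing_coloring_def by fastforce

lemma packing_coloring_adjacent_neq:
  "packing_coloring V E k c \<Longrightarrow> u \<in> V \<Longrightarrow> v \<in> V \<Longrightarrow> u \<noteq> v \<Longrightarrow> E u v \<Longrightarrow> c u \<noteq> c v"
  using packing_coloring_color_less[of V E k c u v 1] packing_coloring_range[of V E k c u]
    gdist_le_1[of E u v] by fastforce

lemma packing_coloring_eq_color_dist_le_2:
  "packing_coloring V E k c \<Longrightarrow> u \<in> V \<Longrightarrow> v \<in> V \<Longrightarrow> u \<noteq> v \<Longrightarrow> gdist E u v \<le> 2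
    \<Longrightarrow> c u = c v \<Longrightarrow> c u = 1"
  using packing_coloring_color_less[of V E k c u v 2] packing_coloring_range[of V E k c u] by fastforce

lemma packing_coloring_mono: "packing_coloring V E j c \<Longrightarrow> j \<le> k \<Longrightarrow> packing_coloring V E k c"
  unfolding packing_coloring_def by fastforce

lemma packing_coloring_exists:
  assumes "finite V"
  shows "\<exists>c. packing_coloring V E (card V) c"
proof -
  obtain h where "bij_betw h V {0..<card V}"
    using ex_bij_betw_finite_nat[OF assms] by blast
  then have "packing_coloring V E (card V) (\<lambda>v. Suc (h v))"
    unfolding packing_coloring_def bij_betw_def inj_on_def by fastforce
  then show ?thesis by blast
qed

text \<open>Finiteness guarantees that some packing colouring exists, without which the LEAST in
  \<^const>\<open>packing_chromatic\<close> would be an unspecified number.\<close>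

lemma packing_chromatic_greater:
  assumes "finite V" and "\<And>c. \<not> packing_coloring V E k c"
  shows "k < packing_chromatic V E"
proof (rule ccontr)
  assume "\<not> k < packing_chromatic V E"
  moreover obtain c where "packing_coloring V E (packing_chromatic V E) c"
    unfolding packing_chromatic_def
    using LeastI_ex[of "\<lambda>k. \<exists>c. packing_coloring V E k c"] packing_coloring_exists[OF assms(1)]
    by blast
  ultimately show False
    using assms(2) packing_coloring_mono by (meson not_less)
qed

lemma cycle_adj_sym: "cycle_adj n u v \<Longrightarrow> cycle_adj n v u"
  unfolding cycle_adj_def by blast

lemma cycle_adj_mod_Suc: "0 < n \<Longrightarrow> cycle_adj n (x mod n) (Suc x mod n)"
  by (simp add: cycle_adj_def mod_Suc_eq)

lemma mod_add_neq:
  fixes d n x :: nat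
  assumes "0 < d" "d < n"
  shows "x mod n \<noteq> (x + d) mod n"
proof
  assume "x mod n = (x + d) mod n"
  then have "n dvd d"
    using mod_eq_dvd_iff_nat[of x "x + d" n] by simp
  then show False
    using assms by (auto dest: dvd_imp_le)
qed

lemma walk_cycle_arc: "0 < n \<Longrightarrow> walk (cycle_adj n) (map (\<lambda>j. (x + j) mod n) [0..<Suc d])"
  unfolding walk_def by (auto simp: cycle_adj_mod_Suc simp del: upt_Suc)

lemma gdist_cycle_arc_le:
  assumes "0 < n" and "\<And>u v. cycle_adj n u v \<Longrightarrow> E u v"
  shows "gdist E (x mod n) ((x + d) mod n) \<le> d"
  by (rule gdist_le_walk[OF walk_mono[OF walk_cycle_arc[OF assms(1)] assms(2)]])
    (simp_all add: hd_map last_map del: upt_Suc)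

lemma odd_add_Suc_mod_even:
  assumes "even n" "u < n"
  shows "odd (u + Suc u mod n)"
proof (cases "Suc u < n")
  case False
  then have "Suc u = n" using assms(2) by simp
  then show ?thesis using assms(1) by auto
qed simp

lemma cycle_adj_odd_sum: "even n \<Longrightarrow> cycle_adj n u v \<Longrightarrow> odd (u + v)"
  unfolding cycle_adj_def using odd_add_Suc_mod_even by (metis Suc_eq_plus1 add.commute)

lemma walk_even_cycle_parity:
  assumes "even n" "walk (cycle_adj n) xs"
  shows "i < length xs \<Longrightarrow> even (xs ! 0 + xs ! i + i)"
proof (induction i)
  case (Suc i)
  have "odd (xs ! i + xs ! Suc i)"
    using assms Suc.prems cycle_adj_odd_sum unfolding walk_def by blast
  with Suc show ?case by presburger
qed simp

lemma gdist_even_cycle_parity: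
  assumes "even n" "a < n" "b < n"
  shows "even (a + b + gdist (cycle_adj n) a b)"
proof -
  have "0 < n"
    using assms(2) by simp
  define d where "d = (b + n - a) mod n"
  have "(a + d) mod n = (a + (b + n - a)) mod n"
    unfolding d_def by (simp add: mod_add_right_eq)
  also have "\<dots> = b"
    using assms(2,3) by simp
  finally have "last (map (\<lambda>j. (a + j) mod n) [0..<Suc d]) = b"
    by (simp add: last_map del: upt_Suc)
  moreover have "hd (map (\<lambda>j. (a + j) mod n) [0..<Suc d]) = a"
    using assms(2) by (simp add: hd_map del: upt_Suc)
  ultimately obtain xs where xs: "walk (cycle_adj n) xs" "hd xs = a" "last xs = b"
      "length xs = Suc (gdist (cycle_adj n) a b)"
    using shortest_walk_exists[OF walk_cycle_arc[OF \<open>0 < n\<close>]] by blast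
  have "xs \<noteq> []"
    using xs(4) by auto
  then have "xs ! 0 = a" "xs ! gdist (cycle_adj n) a b = b"
    using xs(2-4) hd_conv_nth[of xs] last_conv_nth[of xs] by simp_all
  then show ?thesis
    using walk_even_cycle_parity[OF assms(1) xs(1), of "gdist (cycle_adj n) a b"] xs(4) by simp
qed

lemma path_packing_3_coloring_one_in_middle_pair:
  fixes p :: "nat \<Rightarrow> nat"
  assumes range: "\<And>i. p i \<in> {1, 2, 3}"
    and dist1: "\<And>i. p (i + 1) \<noteq> p i"
    and dist2: "\<And>i. p (i + 2) = p i \<Longrightarrow> p i = 1"
    and dist3: "\<And>i. p (i + 3) = p i \<Longrightarrow> p i < 3"
  shows "p (i + 2) = 1 \<or> p (i + 3) = 1"
proof (rule ccontr)
  assume "\<not> ?thesis"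
  moreover have "p (i + 3) \<noteq> p (i + 2)"
    using dist1[of "i + 2"] by (simp add: numeral_eq_Suc)
  ultimately consider "p (i + 2) = 2" "p (i + 3) = 3" | "p (i + 2) = 3" "p (i + 3) = 2"
    using range[of "i + 2"] range[of "i + 3"] by auto
  then show False
  proof cases
    case 1
    then have "p (i + 1) = 1"
      using range[of "i + 1"] dist1[of "i + 1"] dist2[of "i + 1"] by (auto simp: numeral_eq_Suc)
    then show False
      using 1 range[of i] dist1[of i] dist2[of i] dist3[of i] by (auto simp: numeral_eq_Suc)
  next
    case 2
    then have "p (i + 4) = 1"
      using range[of "i + 4"] dist1[of "i + 3"] dist2[of "i + 2"] by (auto simp: numeral_eq_Suc)
    then show False
      using 2 range[of "i + 5"] dist1[of "i + 4"] dist2[of "i + 3"] dist3[of "i + 2"]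
      by (auto simp: numeral_eq_Suc)
  qed
qed

locale cycle_packing_3_coloring =
  fixes n :: nat and V :: "nat set" and E :: "nat \<Rightarrow> nat \<Rightarrow> bool" and c :: "nat \<Rightarrow> nat"
  assumes four_le_n: "4 \<le> n"
    and cycle_subset: "{..<n} \<subseteq> V"
    and cycle_subgraph: "\<And>u v. cycle_adj n u v \<Longrightarrow> E u v"
    and coloring: "packing_coloring V E 3 c"
begin

definition cycle_color :: "nat \<Rightarrow> nat" where
  "cycle_color x = c (x mod n)"

lemma mod_n_in_V: "x mod n \<in> V"
  using cycle_subset four_le_n by auto

lemma cycle_color_range: "cycle_color x \<in> {1, 2, 3}"
proof -
  have "c (x mod n) \<in> {1..3}"
    by (rule packing_coloring_range[OF coloring mod_n_in_V])
  then show ?thesis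
    unfolding cycle_color_def by auto
qed

lemma cycle_color_eq_less:
  assumes "0 < d" "d < n" "cycle_color (x + d) = cycle_color x"
  shows "cycle_color x < d"
proof -
  have "gdist E (x mod n) ((x + d) mod n) \<le> d"
    using gdist_cycle_arc_le cycle_subgraph four_le_n by simp
  moreover have "c (x mod n) = c ((x + d) mod n)"
    using assms(3) unfolding cycle_color_def by simp
  ultimately show ?thesis
    using packing_coloring_color_less[OF coloring mod_n_in_V mod_n_in_V mod_add_neq[OF assms(1,2)]]
    unfolding cycle_color_def by blast
qed

lemma cycle_color_one_middle: "cycle_color (x + 2) = 1 \<or> cycle_color (x + 3) = 1"
proof (rule path_packing_3_coloring_one_in_middle_pair)
  show "cycle_color i \<in> {1, 2, 3}" for i
    by (rule cycle_color_range)
  show "cycle_color (i + 1) \<noteq> cycle_color i" for i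
    using cycle_color_eq_less[of 1 i] cycle_color_range[of i] four_le_n by auto
  show "cycle_color i = 1" if "cycle_color (i + 2) = cycle_color i" for i
    using cycle_color_eq_less[of 2 i] cycle_color_range[of i] four_le_n that by auto
  show "cycle_color i < 3" if "cycle_color (i + 3) = cycle_color i" for i
    using cycle_color_eq_less[of 3 i] four_le_n that by auto
qed

lemma cycle_color_periodic: "cycle_color (x + n) = cycle_color x"
  by (simp add: cycle_color_def)

lemma cycle_color_Suc_one_iff: "cycle_color (Suc x) = 1 \<longleftrightarrow> cycle_color x \<noteq> 1"
proof
  assume "cycle_color (Suc x) = 1"
  then show "cycle_color x \<noteq> 1"
    using cycle_color_eq_less[of 1 x] four_le_n by auto
next
  assume "cycle_color x \<noteq> 1"
  \<comment> \<open>shifting by n - 2 makes x and Suc x the middle pair of a window of six\<close>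
  moreover have "x + n - 2 + 2 = x + n" "x + n - 2 + 3 = Suc x + n"
    using four_le_n by simp_all
  ultimately show "cycle_color (Suc x) = 1"
    using cycle_color_one_middle[of "x + n - 2"] cycle_color_periodic by metis
qed

lemma cycle_color_one_iff: "cycle_color x = 1 \<longleftrightarrow> (cycle_color 0 = 1 \<longleftrightarrow> even x)"
proof (induction x)
  case (Suc x)
  then show ?case
    using cycle_color_Suc_one_iff[of x] by simp
qed simp

lemma even_cycle: "even n"
  using cycle_color_one_iff[of n] cycle_color_periodic[of 0] by auto

lemma color_not_one_same_parity:
  assumes "u < n" "v < n" "c u \<noteq> 1" "c v \<noteq> 1"
  shows "even u \<longleftrightarrow> even v"
  using assms cycle_color_one_iff[of u] cycle_color_one_iff[of v] unfolding cycle_color_def by auto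

lemma cycle_color_neighbours_of_one:
  assumes "cycle_color (Suc x) = 1"
  shows "cycle_color x \<in> {2, 3}" "cycle_color (Suc (Suc x)) \<in> {2, 3}"
    "cycle_color x \<noteq> cycle_color (Suc (Suc x))"
proof -
  have not_one: "cycle_color x \<noteq> 1" "cycle_color (Suc (Suc x)) \<noteq> 1"
    using assms cycle_color_Suc_one_iff[of x] cycle_color_Suc_one_iff[of "Suc x"] by blast+
  then show "cycle_color x \<in> {2, 3}" "cycle_color (Suc (Suc x)) \<in> {2, 3}"
    using cycle_color_range[of x] cycle_color_range[of "Suc (Suc x)"] by auto
  show "cycle_color x \<noteq> cycle_color (Suc (Suc x))"
    using cycle_color_eq_less[of 2 x] cycle_color_range[of x] four_le_n not_one
    by (auto simp: numeral_eq_Suc)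
qed

lemma leaf_neighbour_color_ne_1:
  assumes w: "w \<in> V" "w \<notin> {..<n}" "E w v" and "v < n"
  shows "c v \<noteq> 1"
proof
  assume "c v = 1"
  define x where "x = v + n - 1"
  have v_eq: "Suc x mod n = v"
    using \<open>v < n\<close> four_le_n unfolding x_def by simp
  then have "cycle_color (Suc x) = 1"
    using \<open>c v = 1\<close> by (simp add: cycle_color_def)
  note neighbours = cycle_color_neighbours_of_one[OF this]
  have "cycle_adj n v (x mod n)" "cycle_adj n v (Suc (Suc x) mod n)"
    using cycle_adj_sym[OF cycle_adj_mod_Suc[of n x]] cycle_adj_mod_Suc[of n "Suc x"] four_le_n v_eq
    by simp_all
  then have dist: "gdist E w (x mod n) \<le> 2" "gdist E w (Suc (Suc x) mod n) \<le> 2"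
    using gdist_le_2[of E w v, OF w(3)] cycle_subgraph by simp_all
  have "x mod n < n" "Suc (Suc x) mod n < n" "n \<le> w"
    using four_le_n w(2) by simp_all
  then have "w \<noteq> v" "w \<noteq> x mod n" "w \<noteq> Suc (Suc x) mod n"
    using \<open>v < n\<close> by linarith+
  have "v \<in> V"
    using \<open>v < n\<close> cycle_subset by auto
  then have "c w \<noteq> 1"
    using packing_coloring_adjacent_neq[OF coloring w(1) _ \<open>w \<noteq> v\<close> w(3)] \<open>c v = 1\<close> by simp
  moreover have "c w \<noteq> cycle_color x" "c w \<noteq> cycle_color (Suc (Suc x))"
    using packing_coloring_eq_color_dist_le_2[OF coloring w(1) mod_n_in_V \<open>w \<noteq> x mod n\<close> dist(1)]
      packing_coloring_eq_color_dist_le_2[OF coloring w(1) mod_n_in_V \<open>w \<noteq> Suc (Suc x) mod n\<close> dist(2)]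
      neighbours(1,2) unfolding cycle_color_def by auto
  ultimately show False
    using packing_coloring_range[OF coloring w(1)] neighbours by auto
qed

end

lemma two_pendant_no_packing_3_coloring:
  assumes "4 \<le> n" "a < n" "b < n" "odd (gdist (cycle_adj n) a b)"
  shows "\<not> packing_coloring {0..<n + 2} (two_pendant_adj n a b) 3 c"
proof
  assume "packing_coloring {0..<n + 2} (two_pendant_adj n a b) 3 c"
  then interpret cycle_packing_3_coloring n "{0..<n + 2}" "two_pendant_adj n a b" c
    using assms(1) by unfold_locales (auto simp: two_pendant_adj_def)
  have "c a \<noteq> 1"
    by (rule leaf_neighbour_color_ne_1[of n]) (auto simp: two_pendant_adj_def assms(2))
  moreover have "c b \<noteq> 1"
    by (rule leaf_neighbour_color_ne_1[of "n + 1"]) (auto simp: two_pendant_adj_def assms(3))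
  ultimately have "even a \<longleftrightarrow> even b"
    using color_not_one_same_parity assms(2,3) by blast
  then show False
    using gdist_even_cycle_parity[OF even_cycle assms(2,3)] assms(4) by auto
qed

theorem mainTheorem9:
  fixes n a b k :: nat
  assumes "n \<ge> 4" and "a < n" and "b < n"
    and "gdist (cycle_adj n) a b = 2 * k + 1"
  shows "packing_chromatic {0..<n + 2} (two_pendant_adj n a b) \<ge> 4"
proof -
  have "3 < packing_chromatic {0..<n + 2} (two_pendant_adj n a b)"
    by (rule packing_chromatic_greater) (use two_pendant_no_packing_3_coloring assms in auto)
  then show ?thesis
    by simp
qed

end
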